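(* Let $f,g:\mathbb{R}^2\to\mathbb{R}$ be Lipschitz continuous. If the graphons $(J_1,W_1)$ and $(J_2,W_2)$ are isomorphic up to nullsets, then the graphon dynamical systems $\mathcal D(J_1,W_1)$ and $\mathcal D(J_2,W_2)$ are isometric, i.e. there is a bijective isometry between $L^1(J_2)$ and $L^1(J_1)$ mapping trajectories of one system to trajectories of the other.
   Context: A graphon $(J,W)$ consists of a probability space $J=(\Omega,\mathcal A,\mu)$ and a symmetric measurable $W:\Omega\times\Omega\to[0,1]$. The graphon dynamical system $\mathcal D(J,W)$ is the flow on $L^1(J)$ given by $\dot u_x=f\big(u_x,\int_J W(x,y)g(u_x,u_y)\,d\mu(y)\big)$, where for each $t$ the equation holds for almost every $x$. Two graphons $(J_1,W_1)$, $(J_2,W_2)$ are isomorphic up to nullsets if there is a measure preserving map $\varphi:J_1\to J_2$, invertible up to nullsets, with $W_1(x,y)=W_2(\varphi(x),\varphi(y))$ almost everywhere. *)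

theory Defs
  imports "HOL-Probability.Probability"
begin

definition graphon :: "'a measure \<Rightarrow> ('a \<Rightarrow> 'a \<Rightarrow> real) \<Rightarrow> bool" where
  "graphon M W \<longleftrightarrow> prob_space M \<and>
     (\<lambda>z. W (fst z) (snd z)) \<in> borel_measurable (M \<Otimes>\<^sub>M M) \<and>
     (\<forall>x\<in>space M. \<forall>y\<in>space M. W x y = W y x \<and> 0 \<le> W x y \<and> W x y \<le> 1)"

definition measure_pres :: "'a measure \<Rightarrow> 'b measure \<Rightarrow> ('a \<Rightarrow> 'b) \<Rightarrow> bool" where
  "measure_pres M N \<phi> \<longleftrightarrow> \<phi> \<in> measurable M N \<and> distr M N \<phi> = N"

definition graphon_iso_nullsets ::
  "'a measure \<Rightarrow> ('a \<Rightarrow> 'a \<Rightarrow> real) \<Rightarrow> 'b measure \<Rightarrow> ('b \<Rightarrow> 'b \<Rightarrow> real) \<Rightarrow> bool" where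
  "graphon_iso_nullsets M1 W1 M2 W2 \<longleftrightarrow>
     (\<exists>\<phi> \<psi>. measure_pres M1 M2 \<phi> \<and> measure_pres M2 M1 \<psi> \<and>
        (AE x in M1. \<psi> (\<phi> x) = x) \<and> (AE y in M2. \<phi> (\<psi> y) = y) \<and>
        (AE z in M1 \<Otimes>\<^sub>M M1. W1 (fst z) (snd z) = W2 (\<phi> (fst z)) (\<phi> (snd z))))"

definition gds_rhs ::
  "(real \<times> real \<Rightarrow> real) \<Rightarrow> (real \<times> real \<Rightarrow> real) \<Rightarrow> 'a measure \<Rightarrow> ('a \<Rightarrow> 'a \<Rightarrow> real)
     \<Rightarrow> ('a \<Rightarrow> real) \<Rightarrow> 'a \<Rightarrow> real" where
  "gds_rhs f g M W u x = f (u x, \<integral>y. W x y * g (u x, u y) \<partial>M)"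

definition L1_dist :: "'a measure \<Rightarrow> ('a \<Rightarrow> real) \<Rightarrow> ('a \<Rightarrow> real) \<Rightarrow> real" where
  "L1_dist M u v = (\<integral>x. \<bar>u x - v x\<bar> \<partial>M)"

text \<open>A trajectory of D(J,W) on the time set T: a curve t \<mapsto> u t in L^1(J), differentiable
  in L^1 (within T) with derivative equal to the right-hand side (as an element of L^1,
  i.e. almost everywhere in x).\<close>
definition gds_trajectory ::
  "(real \<times> real \<Rightarrow> real) \<Rightarrow> (real \<times> real \<Rightarrow> real) \<Rightarrow> 'a measure \<Rightarrow> ('a \<Rightarrow> 'a \<Rightarrow> real)
     \<Rightarrow> real set \<Rightarrow> (real \<Rightarrow> 'a \<Rightarrow> real) \<Rightarrow> bool" where
  "gds_trajectory f g M W T u \<longleftrightarrow>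
     (\<forall>t\<in>T. integrable M (u t)) \<and>
     (\<forall>t\<in>T. ((\<lambda>s. L1_dist M (\<lambda>x. u s x - u t x) (\<lambda>x. (s - t) * gds_rhs f g M W (u t) x) / \<bar>s - t\<bar>)
              \<longlongrightarrow> 0) (at t within T))"

text \<open>Isometry of graphon dynamical systems: a map L^1(J2) \<rightarrow> L^1(J1) (acting on representatives)
  which is a distance-preserving bijection on a.e.-classes and maps trajectories of D(J2,W2)
  to trajectories of D(J1,W1) and conversely.\<close>
definition gds_isometric ::
  "(real \<times> real \<Rightarrow> real) \<Rightarrow> (real \<times> real \<Rightarrow> real) \<Rightarrow> 'a measure \<Rightarrow> ('a \<Rightarrow> 'a \<Rightarrow> real)
     \<Rightarrow> 'b measure \<Rightarrow> ('b \<Rightarrow> 'b \<Rightarrow> real) \<Rightarrow> bool" where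
  "gds_isometric f g M1 W1 M2 W2 \<longleftrightarrow>
     (\<exists>\<Phi> :: ('b \<Rightarrow> real) \<Rightarrow> ('a \<Rightarrow> real).
        (\<forall>v. integrable M2 v \<longrightarrow> integrable M1 (\<Phi> v)) \<and>
        (\<forall>v w. integrable M2 v \<longrightarrow> integrable M2 w \<longrightarrow> L1_dist M1 (\<Phi> v) (\<Phi> w) = L1_dist M2 v w) \<and>
        (\<forall>u. integrable M1 u \<longrightarrow> (\<exists>v. integrable M2 v \<and> (AE x in M1. \<Phi> v x = u x))) \<and>
        (\<forall>T v. gds_trajectory f g M2 W2 T v \<longrightarrow> gds_trajectory f g M1 W1 T (\<lambda>t. \<Phi> (v t))) \<and>
        (\<forall>T u. gds_trajectory f g M1 W1 T u \<longrightarrow>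
            (\<exists>v. gds_trajectory f g M2 W2 T v \<and> (\<forall>t\<in>T. AE x in M1. \<Phi> (v t) x = u t x))))"

end

theory Submission
  imports Defs
begin

text \<open>
  An isomorphism \<open>\<phi>\<close> with a.e. inverse \<open>\<psi>\<close> transports functions by composition,
  \<open>v \<mapsto> v \<circ> \<phi>\<close>. Since \<open>\<phi>\<close> is measure preserving, composition preserves integrals, hence
  integrability and \<open>L\<^sup>1\<close> distances, and it is surjective on a.e.-classes with preimage
  \<open>u \<circ> \<psi>\<close>. Because \<open>W\<^sub>1 = W\<^sub>2 \<circ> (\<phi> \<times> \<phi>)\<close> almost everywhere, the right-hand side of the
  graphon dynamical system commutes with composition up to a nullset, so the difference
  quotients defining trajectories coincide. Lipschitz continuity of \<open>f\<close> and \<open>g\<close> enters only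
  through their Borel measurability.
\<close>

lemma gds_rhs_borel_measurable:
  assumes "sigma_finite_measure M"
    and [measurable]: "(\<lambda>z. W (fst z) (snd z)) \<in> borel_measurable (M \<Otimes>\<^sub>M M)"
    and [measurable]: "f \<in> borel_measurable borel" "g \<in> borel_measurable borel"
    and [measurable]: "u \<in> borel_measurable M"
  shows "gds_rhs f g M W u \<in> borel_measurable M"
proof -
  interpret sigma_finite_measure M by fact
  have "(\<lambda>(x, y). W x y * g (u x, u y)) \<in> borel_measurable (M \<Otimes>\<^sub>M M)"
    unfolding case_prod_beta by measurable
  then have "(\<lambda>x. \<integral>y. W x y * g (u x, u y) \<partial>M) \<in> borel_measurable M"
    by (rule borel_measurable_lebesgue_integral)
  then show ?thesis
    unfolding gds_rhs_def by measurable
qed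

lemma measure_pres_AE_comp:
  assumes "measure_pres M N \<phi>" and "AE y in N. P y"
  shows "AE x in M. P (\<phi> x)"
proof (rule AE_distrD[of \<phi> M N])
  show "\<phi> \<in> measurable M N" and "AE y in distr M N \<phi>. P y"
    using assms unfolding measure_pres_def by metis+
qed

lemma measure_pres_integrable_comp:
  fixes v :: "'b \<Rightarrow> 'c::{banach, second_countable_topology}"
  assumes "measure_pres M N \<phi>" and "integrable N v"
  shows "integrable M (\<lambda>x. v (\<phi> x))"
proof (rule integrable_distr[of \<phi> M N])
  show "\<phi> \<in> measurable M N" and "integrable (distr M N \<phi>) v"
    using assms unfolding measure_pres_def by auto
qed

lemma measure_pres_integral_comp:
  fixes v :: "'b \<Rightarrow> 'c::{banach, second_countable_topology}"
  assumes "measure_pres M N \<phi>" and "v \<in> borel_measurable N"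
  shows "(\<integral>x. v (\<phi> x) \<partial>M) = (\<integral>y. v y \<partial>N)"
  using assms integral_distr[of \<phi> M N v] by (simp add: measure_pres_def)

lemma L1_dist_measure_pres_comp:
  assumes "measure_pres M N \<phi>"
    and [measurable]: "u \<in> borel_measurable N" "v \<in> borel_measurable N"
  shows "L1_dist M (\<lambda>x. u (\<phi> x)) (\<lambda>x. v (\<phi> x)) = L1_dist N u v"
  unfolding L1_dist_def
  using measure_pres_integral_comp[OF assms(1), of "\<lambda>y. \<bar>u y - v y\<bar>"] by simp

lemma L1_dist_cong_AE:
  assumes [measurable]: "u \<in> borel_measurable M" "u' \<in> borel_measurable M"
    "v \<in> borel_measurable M" "v' \<in> borel_measurable M"
    and "AE x in M. u x = u' x" and "AE x in M. v x = v' x"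
  shows "L1_dist M u v = L1_dist M u' v'"
  unfolding L1_dist_def
  by (rule integral_cong_AE) (use assms(5,6) in \<open>auto elim: AE_mp\<close>)

lemma kernel_AE_pullback_inverse:
  assumes \<psi>: "measure_pres N M \<psi>" and inv: "AE y in N. \<phi> (\<psi> y) = y"
    and WV: "AE x in M. AE x' in M. W x x' = V (\<phi> x) (\<phi> x')"
  shows "AE y in N. AE y' in N. V y y' = W (\<psi> y) (\<psi> y')"
proof -
  have "AE y in N. AE x' in M. W (\<psi> y) x' = V (\<phi> (\<psi> y)) (\<phi> x')"
    using measure_pres_AE_comp[OF \<psi> WV] .
  then show ?thesis
    using inv
  proof eventually_elim
    case (elim y)
    have "AE y' in N. W (\<psi> y) (\<psi> y') = V (\<phi> (\<psi> y)) (\<phi> (\<psi> y'))"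
      using measure_pres_AE_comp[OF \<psi> elim(1)] .
    then show ?case
      using inv by eventually_elim (use elim(2) in simp)
  qed
qed

lemma gds_rhs_measure_pres_comp:
  assumes \<phi>: "measure_pres M N \<phi>"
    and [measurable]: "(\<lambda>z. W (fst z) (snd z)) \<in> borel_measurable (M \<Otimes>\<^sub>M M)"
    "(\<lambda>z. V (fst z) (snd z)) \<in> borel_measurable (N \<Otimes>\<^sub>M N)"
    and [measurable]: "g \<in> borel_measurable borel" "v \<in> borel_measurable N"
    and WV: "AE x in M. AE x' in M. W x x' = V (\<phi> x) (\<phi> x')"
  shows "AE x in M. gds_rhs f g M W (\<lambda>x. v (\<phi> x)) x = gds_rhs f g N V v (\<phi> x)"
  using WV
proof (rule AE_mp[OF _ AE_I2], intro impI)
  fix x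
  assume x: "x \<in> space M" and WVx: "AE x' in M. W x x' = V (\<phi> x) (\<phi> x')"
  have \<phi>_meas[measurable]: "\<phi> \<in> measurable M N"
    using \<phi> by (simp add: measure_pres_def)
  have \<phi>x: "\<phi> x \<in> space N"
    using measurable_space[OF \<phi>_meas x] .
  have [measurable]: "W x \<in> borel_measurable M" "V (\<phi> x) \<in> borel_measurable N"
    using measurable_Pair2[OF _ x, of "\<lambda>z. W (fst z) (snd z)"]
      measurable_Pair2[OF _ \<phi>x, of "\<lambda>z. V (fst z) (snd z)"] by simp_all
  have "(\<integral>x'. W x x' * g (v (\<phi> x), v (\<phi> x')) \<partial>M)
      = (\<integral>x'. V (\<phi> x) (\<phi> x') * g (v (\<phi> x), v (\<phi> x')) \<partial>M)"
    by (rule integral_cong_AE) (use WVx in auto)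
  also have "\<dots> = (\<integral>y. V (\<phi> x) y * g (v (\<phi> x), v y) \<partial>N)"
    by (rule measure_pres_integral_comp[OF \<phi>]) measurable
  finally show "gds_rhs f g M W (\<lambda>x. v (\<phi> x)) x = gds_rhs f g N V v (\<phi> x)"
    unfolding gds_rhs_def by simp
qed

lemma L1_dist_gds_step_measure_pres_comp:
  assumes M: "sigma_finite_measure M" and N: "sigma_finite_measure N"
    and \<phi>: "measure_pres M N \<phi>"
    and W: "(\<lambda>z. W (fst z) (snd z)) \<in> borel_measurable (M \<Otimes>\<^sub>M M)"
    and V: "(\<lambda>z. V (fst z) (snd z)) \<in> borel_measurable (N \<Otimes>\<^sub>M N)"
    and f: "f \<in> borel_measurable borel" and g: "g \<in> borel_measurable borel"
    and WV: "AE x in M. AE x' in M. W x x' = V (\<phi> x) (\<phi> x')"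
    and [measurable]: "u \<in> borel_measurable N" "w \<in> borel_measurable N"
  shows "L1_dist M (\<lambda>x. u (\<phi> x) - w (\<phi> x)) (\<lambda>x. c * gds_rhs f g M W (\<lambda>x. w (\<phi> x)) x)
       = L1_dist N (\<lambda>y. u y - w y) (\<lambda>y. c * gds_rhs f g N V w y)"
proof -
  have [measurable]: "\<phi> \<in> measurable M N"
    using \<phi> by (simp add: measure_pres_def)
  have [measurable]: "gds_rhs f g M W (\<lambda>x. w (\<phi> x)) \<in> borel_measurable M"
    by (rule gds_rhs_borel_measurable[OF M W f g]) measurable
  have [measurable]: "gds_rhs f g N V w \<in> borel_measurable N"
    by (rule gds_rhs_borel_measurable[OF N V f g]) measurable
  have "L1_dist M (\<lambda>x. u (\<phi> x) - w (\<phi> x)) (\<lambda>x. c * gds_rhs f g M W (\<lambda>x. w (\<phi> x)) x)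
      = L1_dist M (\<lambda>x. u (\<phi> x) - w (\<phi> x)) (\<lambda>x. c * gds_rhs f g N V w (\<phi> x))"
    using gds_rhs_measure_pres_comp[OF \<phi> W V g _ WV, of w]
    by (intro L1_dist_cong_AE) (auto elim: AE_mp)
  also have "\<dots> = L1_dist N (\<lambda>y. u y - w y) (\<lambda>y. c * gds_rhs f g N V w y)"
    by (rule L1_dist_measure_pres_comp[OF \<phi>]) measurable
  finally show ?thesis .
qed

lemma gds_trajectory_measure_pres_comp:
  assumes M: "sigma_finite_measure M" and N: "sigma_finite_measure N"
    and \<phi>: "measure_pres M N \<phi>"
    and W: "(\<lambda>z. W (fst z) (snd z)) \<in> borel_measurable (M \<Otimes>\<^sub>M M)"
    and V: "(\<lambda>z. V (fst z) (snd z)) \<in> borel_measurable (N \<Otimes>\<^sub>M N)"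
    and f: "f \<in> borel_measurable borel" and g: "g \<in> borel_measurable borel"
    and WV: "AE x in M. AE x' in M. W x x' = V (\<phi> x) (\<phi> x')"
    and v: "gds_trajectory f g N V T v"
  shows "gds_trajectory f g M W T (\<lambda>t x. v t (\<phi> x))"
proof -
  have int: "integrable N (v t)" if "t \<in> T" for t
    using v that by (simp add: gds_trajectory_def)
  have "((\<lambda>s. L1_dist M (\<lambda>x. v s (\<phi> x) - v t (\<phi> x))
          (\<lambda>x. (s - t) * gds_rhs f g M W (\<lambda>x. v t (\<phi> x)) x) / \<bar>s - t\<bar>) \<longlongrightarrow> 0) (at t within T)"
    if t: "t \<in> T" for t
  proof (rule Lim_transform_eventually)
    show "((\<lambda>s. L1_dist N (\<lambda>y. v s y - v t y) (\<lambda>y. (s - t) * gds_rhs f g N V (v t) y) / \<bar>s - t\<bar>)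
        \<longlongrightarrow> 0) (at t within T)"
      using v t by (simp add: gds_trajectory_def)
    have "eventually (\<lambda>s. s \<in> T) (at t within T)"
      by (simp add: eventually_at_filter)
    then show "\<forall>\<^sub>F s in at t within T.
        L1_dist N (\<lambda>y. v s y - v t y) (\<lambda>y. (s - t) * gds_rhs f g N V (v t) y) / \<bar>s - t\<bar>
      = L1_dist M (\<lambda>x. v s (\<phi> x) - v t (\<phi> x))
          (\<lambda>x. (s - t) * gds_rhs f g M W (\<lambda>x. v t (\<phi> x)) x) / \<bar>s - t\<bar>"
    proof eventually_elim
      case (elim s)
      then show ?case
        using L1_dist_gds_step_measure_pres_comp[OF M N \<phi> W V f g WV, of "v s" "v t" "s - t"]
          int[OF elim] int[OF t] by simp
    qed
  qed
  moreover have "integrable M (\<lambda>x. v t (\<phi> x))" if "t \<in> T" for t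
    using measure_pres_integrable_comp[OF \<phi> int[OF that]] .
  ultimately show ?thesis
    unfolding gds_trajectory_def by blast
qed

lemma gds_isometric_by_composition:
  assumes M: "sigma_finite_measure M" and N: "sigma_finite_measure N"
    and W: "(\<lambda>z. W (fst z) (snd z)) \<in> borel_measurable (M \<Otimes>\<^sub>M M)"
    and V: "(\<lambda>z. V (fst z) (snd z)) \<in> borel_measurable (N \<Otimes>\<^sub>M N)"
    and f: "f \<in> borel_measurable borel" and g: "g \<in> borel_measurable borel"
    and \<phi>: "measure_pres M N \<phi>" and \<psi>: "measure_pres N M \<psi>"
    and \<psi>\<phi>: "AE x in M. \<psi> (\<phi> x) = x" and \<phi>\<psi>: "AE y in N. \<phi> (\<psi> y) = y"
    and WV: "AE x in M. AE x' in M. W x x' = V (\<phi> x) (\<phi> x')"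
  shows "gds_isometric f g M W N V"
  unfolding gds_isometric_def
proof (intro exI[of _ "\<lambda>v x. v (\<phi> x)"] conjI allI impI)
  show "integrable M (\<lambda>x. v (\<phi> x))" if "integrable N v" for v :: "'b \<Rightarrow> real"
    using measure_pres_integrable_comp[OF \<phi> that] .
  show "L1_dist M (\<lambda>x. v (\<phi> x)) (\<lambda>x. w (\<phi> x)) = L1_dist N v w"
    if "integrable N v" "integrable N w" for v w :: "'b \<Rightarrow> real"
    using L1_dist_measure_pres_comp[OF \<phi>] that by blast
  show "\<exists>v. integrable N v \<and> (AE x in M. v (\<phi> x) = u x)" if "integrable M u" for u :: "'a \<Rightarrow> real"
    using measure_pres_integrable_comp[OF \<psi> that] \<psi>\<phi> by auto
  show "gds_trajectory f g M W T (\<lambda>t x. v t (\<phi> x))" if "gds_trajectory f g N V T v" for T v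
    using gds_trajectory_measure_pres_comp[OF M N \<phi> W V f g WV that] .
  show "\<exists>v. gds_trajectory f g N V T v \<and> (\<forall>t\<in>T. AE x in M. v t (\<phi> x) = u t x)"
    if "gds_trajectory f g M W T u" for T u
  proof (intro exI conjI)
    show "gds_trajectory f g N V T (\<lambda>t y. u t (\<psi> y))"
      using gds_trajectory_measure_pres_comp[OF N M \<psi> V W f g
          kernel_AE_pullback_inverse[OF \<psi> \<phi>\<psi> WV] that] .
    show "\<forall>t\<in>T. AE x in M. u t (\<psi> (\<phi> x)) = u t x"
      using \<psi>\<phi> by auto
  qed
qed

theorem corollary3p13:
  fixes f g :: "real \<times> real \<Rightarrow> real"
    and M1 :: "'a measure" and W1 :: "'a \<Rightarrow> 'a \<Rightarrow> real"
    and M2 :: "'b measure" and W2 :: "'b \<Rightarrow> 'b \<Rightarrow> real"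
  assumes "\<exists>L. L-lipschitz_on UNIV f"
    and "\<exists>L. L-lipschitz_on UNIV g"
    and "graphon M1 W1" and "graphon M2 W2"
    and "graphon_iso_nullsets M1 W1 M2 W2"
  shows "gds_isometric f g M1 W1 M2 W2"
proof -
  have f: "f \<in> borel_measurable borel" and g: "g \<in> borel_measurable borel"
    using assms(1,2) by (auto intro: borel_measurable_continuous_onI lipschitz_on_continuous_on)
  have M1: "prob_space M1" "(\<lambda>z. W1 (fst z) (snd z)) \<in> borel_measurable (M1 \<Otimes>\<^sub>M M1)"
    and M2: "prob_space M2" "(\<lambda>z. W2 (fst z) (snd z)) \<in> borel_measurable (M2 \<Otimes>\<^sub>M M2)"
    using assms(3,4) by (auto simp: graphon_def)
  then interpret pair_prob_space M1 M1
    by (simp add: pair_prob_space_def pair_sigma_finite_def prob_space_imp_sigma_finite)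
  obtain \<phi> \<psi> where \<phi>: "measure_pres M1 M2 \<phi>" and \<psi>: "measure_pres M2 M1 \<psi>"
    and \<psi>\<phi>: "AE x in M1. \<psi> (\<phi> x) = x" and \<phi>\<psi>: "AE y in M2. \<phi> (\<psi> y) = y"
    and W12: "AE z in M1 \<Otimes>\<^sub>M M1. W1 (fst z) (snd z) = W2 (\<phi> (fst z)) (\<phi> (snd z))"
    using assms(5) unfolding graphon_iso_nullsets_def by blast
  have "AE x in M1. AE x' in M1. W1 x x' = W2 (\<phi> x) (\<phi> x')"
    using AE_pair[OF W12] by simp
  then show ?thesis
    using gds_isometric_by_composition[OF _ _ M1(2) M2(2) f g \<phi> \<psi> \<psi>\<phi> \<phi>\<psi>] M1(1) M2(1)
    by (simp add: prob_space_imp_sigma_finite)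
qed

end
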